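(* Let $r\ge 6$ and $n\ge 3$, and let $v=(u_1,1)\in V(C_r\times K_n)$. Then the subcomplex $st(v)\cap SC(v)$ of $I(C_r\times K_n)$ is the union of subcomplexes $X_1,\dots,X_{n-1},Y_1,\dots,Y_{n-1}$ such that: (1) for every $i$, $X_i\cong Y_i\cong I(G_{r-4,n})$; (2) if $r\ge7$, for every $i$, $X_i\cap Y_i\cong I(\mathring W_{r-5,n})$; (3) if $r\ge 7$, for every $i\ne j$, $X_i\cap Y_j\cong I(\mathring H_{r-5,n})$; (4) for every $i\ne j$, $X_i\cap X_j$ and $Y_i\cap Y_j$ are contractible; (5) the intersection of any $m\ge 3$ distinct complexes among $X_1,\dots,X_{n-1},Y_1,\dots,Y_{n-1}$ is contractible.
   Context: $C_r$ is the cycle with vertices $u_1,\dots,u_r$ (edges $u_iu_{i+1}$ and $u_ru_1$); $K_n$ is the complete graph on $\{1,\dots,n\}$; $C_r\times K_n$ is the categorical product ($(u_i,a)$ adjacent to $(u_{i'},b)$ iff $u_iu_{i'}$ is an edge of $C_r$ and $a\ne b$). $P_k$ is the path $u_1,\dots,u_k$ and $P_k\times K_n$ is defined analogously. For $k\ge2$: $W_{k,n}$ is obtained from $P_k\times K_n$ by adding vertices $v_1,v_2$ and edges $(u_1,i)v_1$ ($i\ne2$), $(u_k,i)v_2$ ($i\ne2$); $H_{k,n}$ is obtained from $P_k\times K_n$ by adding vertices $v_1,v_2$ and edges $(u_1,i)v_1$ ($i\ge2$), $(u_k,i)v_2$ ($i\ne2$); $G_{k,n}$ is $H_{k,n}$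 plus vertices $w_1,w_2$ and edges $v_1w_1,w_1w_2,w_2v_2$; $\mathring W_{k,n}$ is $W_{k,n}$ plus vertices $w_1,w,w_2$ and edges $w_1w,ww_2,v_1w_1,v_2w_2$; $\mathring H_{k,n}$ is $H_{k,n}$ plus vertices $w_1,w_2$ and edges $v_1w_1,v_2w_2$. $I(G)$ is the independence complex (simplices = non-empty independent vertex sets). In a simplicial complex $K$, $st(\sigma)=\{\tau\in K:\tau\cup\sigma\in K\}$; in $I(G)$, the star cluster of a vertex $v$ is $SC(v)=\bigcup_{u\in N(v)}st(u)$, where $N(v)$ is the set of neighbours of $v$ in $G$. $\cong$ denotes isomorphism of simplicial complexes. *)

theory Defs
  imports "HOL-Analysis.Analysis"
begin

definition simplicial_complex :: "'v set set \<Rightarrow> bool" where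
  "simplicial_complex K \<longleftrightarrow>
     (\<forall>\<sigma>\<in>K. finite \<sigma> \<and> \<sigma> \<noteq> {} \<and> (\<forall>\<tau>. \<tau> \<subseteq> \<sigma> \<and> \<tau> \<noteq> {} \<longrightarrow> \<tau> \<in> K))"

definition subcomplex :: "'v set set \<Rightarrow> 'v set set \<Rightarrow> bool" where
  "subcomplex L K \<longleftrightarrow> simplicial_complex L \<and> L \<subseteq> K"

definition complex_iso :: "'v set set \<Rightarrow> 'w set set \<Rightarrow> bool" (infix "\<cong>\<^sub>s" 50) where
  "K \<cong>\<^sub>s L \<longleftrightarrow> (\<exists>f. bij_betw f (\<Union>K) (\<Union>L) \<and> (\<forall>\<sigma>. \<sigma> \<subseteq> \<Union>K \<longrightarrow> (\<sigma> \<in> K \<longleftrightarrow> f ` \<sigma> \<in> L)))"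

definition star :: "'v set set \<Rightarrow> 'v set \<Rightarrow> 'v set set" where
  "star K \<sigma> = {\<tau> \<in> K. \<tau> \<union> \<sigma> \<in> K}"

text \<open>Geometric realisation: points are barycentric coordinate functions whose support
is a simplex, with the (product = Euclidean, for finite complexes) topology.\<close>

definition geom_points :: "'v set set \<Rightarrow> ('v \<Rightarrow> real) set" where
  "geom_points K = {f. {x. f x \<noteq> 0} \<in> K \<and> (\<forall>x. 0 \<le> f x) \<and> sum f {x. f x \<noteq> 0} = 1}"

definition geom_real :: "'v set set \<Rightarrow> ('v \<Rightarrow> real) topology" where
  "geom_real K = subtopology (powertop_real UNIV) (geom_points K)"

definition contractible_complex :: "'v set set \<Rightarrow> bool" where
  "contractible_complex K \<longleftrightarrow> K \<noteq> {} \<and> contractible_space (geom_real K)"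

definition indep_complex :: "'v set \<Rightarrow> ('v \<Rightarrow> 'v \<Rightarrow> bool) \<Rightarrow> 'v set set" where
  "indep_complex V E = {\<sigma>. \<sigma> \<noteq> {} \<and> finite \<sigma> \<and> \<sigma> \<subseteq> V \<and> (\<forall>x\<in>\<sigma>. \<forall>y\<in>\<sigma>. \<not> E x y)}"

definition nbhd :: "'v set \<Rightarrow> ('v \<Rightarrow> 'v \<Rightarrow> bool) \<Rightarrow> 'v \<Rightarrow> 'v set" where
  "nbhd V E v = {u \<in> V. E v u}"

definition star_cluster :: "'v set \<Rightarrow> ('v \<Rightarrow> 'v \<Rightarrow> bool) \<Rightarrow> 'v \<Rightarrow> 'v set set" where
  "star_cluster V E v = (\<Union>u\<in>nbhd V E v. star (indep_complex V E) {u})"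

definition cyc_adj :: "nat \<Rightarrow> nat \<Rightarrow> nat \<Rightarrow> bool" where
  "cyc_adj r i j \<longleftrightarrow> j = i + 1 \<or> i = j + 1 \<or> (i = 1 \<and> j = r) \<or> (i = r \<and> j = 1)"

definition CK_V :: "nat \<Rightarrow> nat \<Rightarrow> (nat \<times> nat) set" where
  "CK_V r n = {1..r} \<times> {1..n}"

definition CK_E :: "nat \<Rightarrow> (nat \<times> nat) \<Rightarrow> (nat \<times> nat) \<Rightarrow> bool" where
  "CK_E r x y \<longleftrightarrow> cyc_adj r (fst x) (fst y) \<and> snd x \<noteq> snd y"

datatype gvert = P nat nat | V1 | V2 | W1 | Wm | W2

definition PK_V :: "nat \<Rightarrow> nat \<Rightarrow> gvert set" where
  "PK_V k n = {P i a | i a. 1 \<le> i \<and> i \<le> k \<and> 1 \<le> a \<and> a \<le> n}"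

definition PK_R :: "gvert \<Rightarrow> gvert \<Rightarrow> bool" where
  "PK_R x y \<longleftrightarrow> (\<exists>i a b. x = P i a \<and> y = P (i + 1) b \<and> a \<noteq> b)"

definition symc :: "('v \<Rightarrow> 'v \<Rightarrow> bool) \<Rightarrow> 'v \<Rightarrow> 'v \<Rightarrow> bool" where
  "symc R x y \<longleftrightarrow> R x y \<or> R y x"

definition W_V :: "nat \<Rightarrow> nat \<Rightarrow> gvert set" where
  "W_V k n = PK_V k n \<union> {V1, V2}"
definition W_R :: "nat \<Rightarrow> gvert \<Rightarrow> gvert \<Rightarrow> bool" where
  "W_R k x y \<longleftrightarrow> PK_R x y \<or> (\<exists>i. i \<noteq> 2 \<and> x = P 1 i \<and> y = V1) \<or> (\<exists>i. i \<noteq> 2 \<and> x = P k i \<and> y = V2)"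

definition H_V :: "nat \<Rightarrow> nat \<Rightarrow> gvert set" where
  "H_V k n = PK_V k n \<union> {V1, V2}"
definition H_R :: "nat \<Rightarrow> gvert \<Rightarrow> gvert \<Rightarrow> bool" where
  "H_R k x y \<longleftrightarrow> PK_R x y \<or> (\<exists>i. 2 \<le> i \<and> x = P 1 i \<and> y = V1) \<or> (\<exists>i. i \<noteq> 2 \<and> x = P k i \<and> y = V2)"

definition G_V :: "nat \<Rightarrow> nat \<Rightarrow> gvert set" where
  "G_V k n = H_V k n \<union> {W1, W2}"
definition G_R :: "nat \<Rightarrow> gvert \<Rightarrow> gvert \<Rightarrow> bool" where
  "G_R k x y \<longleftrightarrow> H_R k x y \<or> (x = V1 \<and> y = W1) \<or> (x = W1 \<and> y = W2) \<or> (x = W2 \<and> y = V2)"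

definition Wr_V :: "nat \<Rightarrow> nat \<Rightarrow> gvert set" where
  "Wr_V k n = W_V k n \<union> {W1, Wm, W2}"
definition Wr_R :: "nat \<Rightarrow> gvert \<Rightarrow> gvert \<Rightarrow> bool" where
  "Wr_R k x y \<longleftrightarrow> W_R k x y \<or> (x = W1 \<and> y = Wm) \<or> (x = Wm \<and> y = W2) \<or> (x = V1 \<and> y = W1) \<or> (x = V2 \<and> y = W2)"

definition Hr_V :: "nat \<Rightarrow> nat \<Rightarrow> gvert set" where
  "Hr_V k n = H_V k n \<union> {W1, W2}"
definition Hr_R :: "nat \<Rightarrow> gvert \<Rightarrow> gvert \<Rightarrow> bool" where
  "Hr_R k x y \<longleftrightarrow> H_R k x y \<or> (x = V1 \<and> y = W1) \<or> (x = V2 \<and> y = W2)"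

definition I_G :: "nat \<Rightarrow> nat \<Rightarrow> gvert set set" where
  "I_G k n = indep_complex (G_V k n) (symc (G_R k))"
definition I_Wr :: "nat \<Rightarrow> nat \<Rightarrow> gvert set set" where
  "I_Wr k n = indep_complex (Wr_V k n) (symc (Wr_R k))"
definition I_Hr :: "nat \<Rightarrow> nat \<Rightarrow> gvert set set" where
  "I_Hr k n = indep_complex (Hr_V k n) (symc (Hr_R k))"

end

theory Submission
  imports Defs
begin

text \<open>In an independence complex the star of a vertex u is the independence complex of the
vertices not adjacent to u. Hence st(v) \<inter> st(u) is the independence complex of the common
non-neighbours of v and u, and st(v) \<inter> SC(v) is the union of these complexes over the
neighbours u = (u_2, a) and u = (u_r, a), a = 2..n, of v = (u_1, 1). For u = (u_2, a) the
common non-neighbours are the single vertices (u_1, a), (u_2, 1), (u_3, a), (u_r, 1) in the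
layers 1, 2, 3, r and the full layers 4, ..., r - 1: up to swapping the colours 2 and a this
is G_{r-4,n}, and the intersections X_i \<inter> Y_j are identified in the same way. Two pieces on
the same side have different colours a, so in their intersection the layers 1 and 3 (resp. 1
and r - 1) are empty and (u_2, 1) (resp. (u_r, 1)) is an isolated vertex: the intersection
is a cone, hence contractible.\<close>

lemma Union_indep_complex:
  assumes "\<And>x. x \<in> V \<Longrightarrow> \<not> E x x"
  shows "\<Union>(indep_complex V E) = V"
proof
  show "V \<subseteq> \<Union>(indep_complex V E)"
  proof
    fix x assume "x \<in> V"
    then have "{x} \<in> indep_complex V E" using assms by (auto simp: indep_complex_def)
    then show "x \<in> \<Union>(indep_complex V E)" by blast
  qed
qed (auto simp: indep_complex_def)

lemma simplicial_complex_indep_complex: "simplicial_complex (indep_complex V E)"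
  unfolding simplicial_complex_def indep_complex_def by (auto intro: finite_subset)

lemma subcomplex_indep_complex: "U \<subseteq> V \<Longrightarrow> subcomplex (indep_complex U E) (indep_complex V E)"
  unfolding subcomplex_def using simplicial_complex_indep_complex
  by (auto simp: indep_complex_def)

lemma indep_complex_Int: "indep_complex U E \<inter> indep_complex U' E = indep_complex (U \<inter> U') E"
  unfolding indep_complex_def by blast

lemma Int_INT_indep_complex:
  assumes "A \<noteq> {} \<or> B \<noteq> {}"
  shows "(\<Inter>i\<in>A. indep_complex (U i) E) \<inter> (\<Inter>i\<in>B. indep_complex (U' i) E)
    = indep_complex ((\<Inter>i\<in>A. U i) \<inter> (\<Inter>i\<in>B. U' i)) E"
  using assms unfolding indep_complex_def by blast

lemma star_singleton_indep_complex:
  assumes "u \<in> V" "\<not> E u u"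
  shows "star (indep_complex V E) {u} = indep_complex {x \<in> V. \<not> E x u \<and> \<not> E u x} E"
  using assms unfolding star_def indep_complex_def by blast

definition common_nonnbhd :: "'v set \<Rightarrow> ('v \<Rightarrow> 'v \<Rightarrow> bool) \<Rightarrow> 'v \<Rightarrow> 'v \<Rightarrow> 'v set" where
  "common_nonnbhd V E v u = {x \<in> V. \<not> E x v \<and> \<not> E x u}"

lemma star_Int_star_cluster_indep_complex:
  assumes "v \<in> V" and sym: "\<And>x y. E x y \<longleftrightarrow> E y x" and irrefl: "\<And>x. \<not> E x x"
  shows "star (indep_complex V E) {v} \<inter> star_cluster V E v
    = (\<Union>u\<in>nbhd V E v. indep_complex (common_nonnbhd V E v u) E)"
proof -
  have star_eq: "star (indep_complex V E) {u} = indep_complex {x \<in> V. \<not> E x u} E" if "u \<in> V" for u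
    using star_singleton_indep_complex[of u V E, OF that irrefl] sym by simp
  have "star (indep_complex V E) {v} \<inter> star (indep_complex V E) {u}
      = indep_complex (common_nonnbhd V E v u) E" if "u \<in> nbhd V E v" for u
  proof -
    have "u \<in> V" using that by (simp add: nbhd_def)
    then show ?thesis
      unfolding star_eq[OF \<open>v \<in> V\<close>] star_eq[OF \<open>u \<in> V\<close>] indep_complex_Int common_nonnbhd_def
      by (simp add: Collect_conj_eq Int_assoc Int_left_commute)
  qed
  then show ?thesis unfolding star_cluster_def by blast
qed

lemma indep_complex_iso:
  assumes bij: "bij_betw g V' V"
    and edges: "\<And>x y. x \<in> V' \<Longrightarrow> y \<in> V' \<Longrightarrow> E' x y \<longleftrightarrow> E (g x) (g y)"
    and irrefl: "\<And>x. x \<in> V \<Longrightarrow> \<not> E x x" and irrefl': "\<And>x. x \<in> V' \<Longrightarrow> \<not> E' x x"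
  shows "indep_complex V E \<cong>\<^sub>s indep_complex V' E'"
proof -
  define f where "f = inv_into V' g"
  have f: "bij_betw f V V'" unfolding f_def by (rule bij_betw_inv_into[OF bij])
  have gf: "g (f x) = x" if "x \<in> V" for x
    unfolding f_def using bij that by (simp add: bij_betw_inv_into_right)
  have "\<sigma> \<in> indep_complex V E \<longleftrightarrow> f ` \<sigma> \<in> indep_complex V' E'" if \<sigma>: "\<sigma> \<subseteq> V" for \<sigma>
  proof -
    have "inj_on f \<sigma>" using f \<sigma> by (meson bij_betw_def inj_on_subset)
    moreover have "f ` \<sigma> \<subseteq> V'" using f \<sigma> by (auto simp: bij_betw_def)
    moreover have "E' (f x) (f y) \<longleftrightarrow> E x y" if "x \<in> \<sigma>" "y \<in> \<sigma>" for x y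
    proof -
      have "x \<in> V" "y \<in> V" using \<sigma> that by auto
      then have "E' (f x) (f y) \<longleftrightarrow> E (g (f x)) (g (f y))"
        by (intro edges bij_betw_apply[OF f])
      then show ?thesis using gf \<open>x \<in> V\<close> \<open>y \<in> V\<close> by simp
    qed
    ultimately show ?thesis using \<sigma> unfolding indep_complex_def by (auto simp: finite_image_iff)
  qed
  moreover have "\<Union>(indep_complex V E) = V" "\<Union>(indep_complex V' E') = V'"
    using Union_indep_complex irrefl irrefl' by metis+
  ultimately show ?thesis unfolding complex_iso_def using f by (intro exI[of _ f]) auto
qed

section \<open>Cones are contractible\<close>

lemma cone_segment_in_geom_points:
  assumes apex: "{x} \<in> K" "\<And>\<sigma>. \<sigma> \<in> K \<Longrightarrow> insert x \<sigma> \<in> K"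
    and t: "t \<in> {0..1}" and f: "f \<in> geom_points K"
  shows "(\<lambda>y. (1 - t) * f y + t * indicator {x} y) \<in> geom_points K" (is "?g \<in> _")
proof -
  define S where "S = {y. f y \<noteq> 0}"
  have S: "S \<in> K" "\<And>y. 0 \<le> f y" "sum f S = 1" using f by (auto simp: geom_points_def S_def)
  have "finite S" using S(3) by (metis sum.infinite zero_neq_one)
  have f0: "f y = 0" if "y \<notin> S" for y using that by (simp add: S_def)
  have nonneg: "0 \<le> ?g y" for y using S(2) t by simp
  have supp: "{y. ?g y \<noteq> 0} \<in> K"
  proof -
    consider "t = 0" | "t = 1" | "0 < t" "t < 1" using t by fastforce
    then show ?thesis
    proof cases
      case 1 then show ?thesis using S(1) by (simp add: S_def)
    next
      case 2 then show ?thesis using apex(1) by (simp add: indicator_def)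
    next
      case 3
      have "0 \<le> (1 - t) * f x" using S(2) 3 by simp
      then have "{y. ?g y \<noteq> 0} = insert x S" using 3 by (auto simp: S_def indicator_def)
      then show ?thesis using apex(2)[OF S(1)] by simp
    qed
  qed
  have "sum ?g {y. ?g y \<noteq> 0} = sum ?g (insert x S)"
  proof (rule sum.mono_neutral_left)
    show "{y. ?g y \<noteq> 0} \<subseteq> insert x S" using f0 by (auto simp: indicator_def)
  qed (use \<open>finite S\<close> in auto)
  also have "\<dots> = (1 - t) * sum f (insert x S) + t * sum (indicator {x}) (insert x S)"
    by (simp add: sum.distrib sum_distrib_left)
  also have "sum f (insert x S) = 1"
    using S(3) \<open>finite S\<close> f0[of x] by (simp add: sum.insert_if)
  also have "sum (indicator {x}) (insert x S) = (1::real)"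
    using \<open>finite S\<close> by (simp add: indicator_def)
  finally show ?thesis using nonneg supp by (simp add: geom_points_def)
qed

lemma contractible_complex_cone:
  assumes apex: "{x} \<in> K" "\<And>\<sigma>. \<sigma> \<in> K \<Longrightarrow> insert x \<sigma> \<in> K"
  shows "contractible_complex K"
proof -
  define h where "h = (\<lambda>(t, f) y. (1 - t) * f y + t * indicator {x} y :: real)"
  have "continuous_map (prod_topology (top_of_set {0..1}) (geom_real K)) (powertop_real UNIV) h"
    unfolding continuous_map_componentwise_UNIV geom_real_def
  proof
    fix y
    let ?T = "prod_topology (top_of_set {0..1}) (geom_real K)"
    have "continuous_map ?T euclideanreal (\<lambda>p. snd p y)"
      using continuous_map_compose[OF continuous_map_snd continuous_map_from_subtopology[OF
            continuous_map_product_projection[of y UNIV "\<lambda>_. euclideanreal"]]]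
      by (simp add: o_def geom_real_def)
    moreover have "continuous_map ?T euclideanreal fst"
      by (metis continuous_map_fst continuous_map_into_fulltopology)
    ultimately show "continuous_map
        (prod_topology (top_of_set {0..1}) (subtopology (powertop_real UNIV) (geom_points K)))
        euclideanreal (\<lambda>p. h p y)"
      unfolding h_def geom_real_def by (simp add: case_prod_beta, intro continuous_intros; simp)
  qed
  moreover have "h (t, f) \<in> geom_points K" if "t \<in> {0..1}" "f \<in> geom_points K" for t f
    using cone_segment_in_geom_points[OF apex that] by (simp add: h_def)
  ultimately have "continuous_map (prod_topology (top_of_set {0..1}) (geom_real K)) (geom_real K) h"
    unfolding continuous_map_in_subtopology geom_real_def[of K] topspace_prod_topology by auto
  moreover have "h (0, f) = id f" "h (1, f) = indicator {x}" for f
    by (simp_all add: h_def)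
  ultimately have "homotopic_with (\<lambda>_. True) (geom_real K) (geom_real K) id (\<lambda>_. indicator {x})"
    unfolding homotopic_with_def by (intro exI[of _ h]) simp
  moreover have "K \<noteq> {}" using apex by auto
  ultimately show ?thesis unfolding contractible_complex_def contractible_space_def by blast
qed

lemma contractible_indep_complex_isolated:
  assumes "x \<in> U" "\<And>y. y \<in> U \<Longrightarrow> \<not> E x y \<and> \<not> E y x"
  shows "contractible_complex (indep_complex U E)"
proof (rule contractible_complex_cone[of x])
  show "{x} \<in> indep_complex U E" using assms by (auto simp: indep_complex_def)
  show "insert x \<sigma> \<in> indep_complex U E" if "\<sigma> \<in> indep_complex U E" for \<sigma>
    using that assms unfolding indep_complex_def by blast
qed

section \<open>The star cluster of (u_1, 1) in C_r \<times> K_n\<close>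

lemma CK_E_irrefl: "\<not> CK_E r x x"
  by (simp add: CK_E_def)

lemma CK_E_sym: "CK_E r x y \<longleftrightarrow> CK_E r y x"
  by (auto simp: CK_E_def cyc_adj_def)

definition CK_X_verts :: "nat \<Rightarrow> nat \<Rightarrow> nat \<Rightarrow> (nat \<times> nat) set" where
  "CK_X_verts r n a = common_nonnbhd (CK_V r n) (CK_E r) (1, 1) (2, a)"

definition CK_Y_verts :: "nat \<Rightarrow> nat \<Rightarrow> nat \<Rightarrow> (nat \<times> nat) set" where
  "CK_Y_verts r n a = common_nonnbhd (CK_V r n) (CK_E r) (1, 1) (r, a)"

lemma mem_CK_X_verts:
  assumes "4 \<le> r"
  shows "(p, c) \<in> CK_X_verts r n a \<longleftrightarrow>
    p \<in> {1..r} \<and> c \<in> {1..n} \<and> (p \<in> {2, r} \<longrightarrow> c = 1) \<and> (p \<in> {1, 3} \<longrightarrow> c = a)"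
  using assms unfolding CK_X_verts_def common_nonnbhd_def CK_V_def CK_E_def cyc_adj_def by auto

lemma mem_CK_Y_verts:
  assumes "4 \<le> r"
  shows "(p, c) \<in> CK_Y_verts r n a \<longleftrightarrow>
    p \<in> {1..r} \<and> c \<in> {1..n} \<and> (p \<in> {2, r} \<longrightarrow> c = 1) \<and> (p \<in> {1, r - 1} \<longrightarrow> c = a)"
  using assms unfolding CK_Y_verts_def common_nonnbhd_def CK_V_def CK_E_def cyc_adj_def by auto

text \<open>The complexes X_i and Y_i of the statement: the index i \<in> {1..n-1} stands for the
colour i + 1 of the neighbour (u_2, i + 1), resp. (u_r, i + 1), of v.\<close>

definition CK_X :: "nat \<Rightarrow> nat \<Rightarrow> nat \<Rightarrow> (nat \<times> nat) set set" where
  "CK_X r n i = indep_complex (CK_X_verts r n (Suc i)) (CK_E r)"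

definition CK_Y :: "nat \<Rightarrow> nat \<Rightarrow> nat \<Rightarrow> (nat \<times> nat) set set" where
  "CK_Y r n i = indep_complex (CK_Y_verts r n (Suc i)) (CK_E r)"

lemma subcomplex_CK_X: "subcomplex (CK_X r n i) (indep_complex (CK_V r n) (CK_E r))"
  unfolding CK_X_def CK_X_verts_def common_nonnbhd_def by (rule subcomplex_indep_complex) blast

lemma subcomplex_CK_Y: "subcomplex (CK_Y r n i) (indep_complex (CK_V r n) (CK_E r))"
  unfolding CK_Y_def CK_Y_verts_def common_nonnbhd_def by (rule subcomplex_indep_complex) blast

lemma nbhd_CK_1_1:
  assumes "3 \<le> r"
  shows "nbhd (CK_V r n) (CK_E r) (1, 1) = (\<lambda>a. (2, a)) ` {2..n} \<union> (\<lambda>a. (r, a)) ` {2..n}"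
proof (rule set_eqI)
  fix u :: "nat \<times> nat"
  obtain p c where u: "u = (p, c)" by force
  show "u \<in> nbhd (CK_V r n) (CK_E r) (1, 1) \<longleftrightarrow> u \<in> (\<lambda>a. (2, a)) ` {2..n} \<union> (\<lambda>a. (r, a)) ` {2..n}"
    using assms unfolding u nbhd_def CK_V_def CK_E_def cyc_adj_def by auto
qed

lemma star_Int_star_cluster_CK:
  assumes "3 \<le> r" "1 \<le> n"
  shows "star (indep_complex (CK_V r n) (CK_E r)) {(1, 1)} \<inter> star_cluster (CK_V r n) (CK_E r) (1, 1)
    = (\<Union>i\<in>{1..n-1}. CK_X r n i \<union> CK_Y r n i)"
proof -
  have "(1, 1) \<in> CK_V r n" using assms by (simp add: CK_V_def)
  have colours: "{2..n} = Suc ` {1..n-1}" using assms by (simp add: numeral_2_eq_2)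
  have "star (indep_complex (CK_V r n) (CK_E r)) {(1, 1)} \<inter> star_cluster (CK_V r n) (CK_E r) (1, 1)
    = (\<Union>u\<in>nbhd (CK_V r n) (CK_E r) (1, 1).
        indep_complex (common_nonnbhd (CK_V r n) (CK_E r) (1, 1) u) (CK_E r))"
    by (rule star_Int_star_cluster_indep_complex[OF \<open>(1, 1) \<in> CK_V r n\<close> CK_E_sym CK_E_irrefl])
  also have "\<dots> = (\<Union>a\<in>{2..n}.
      indep_complex (CK_X_verts r n a) (CK_E r) \<union> indep_complex (CK_Y_verts r n a) (CK_E r))"
    unfolding nbhd_CK_1_1[OF \<open>3 \<le> r\<close>] by (simp add: UN_Un_distrib CK_X_verts_def CK_Y_verts_def)
  also have "\<dots> = (\<Union>i\<in>{1..n-1}. CK_X r n i \<union> CK_Y r n i)"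
    unfolding colours SUP_image CK_X_def CK_Y_def o_def ..
  finally show ?thesis .
qed

lemma card_ge_2_ex_distinct:
  assumes "2 \<le> card A"
  shows "\<exists>i\<in>A. \<exists>j\<in>A. i \<noteq> j"
proof -
  have "finite A" using assms by (metis card.infinite not_numeral_le_zero)
  then show ?thesis using assms card_le_Suc0_iff_eq[of A] by auto
qed

lemma contractible_CK_Inter:
  assumes "4 \<le> r" "1 \<le> n"
    and two: "(\<exists>i\<in>A. \<exists>j\<in>A. i \<noteq> j) \<or> (\<exists>i\<in>B. \<exists>j\<in>B. i \<noteq> j)"
  shows "contractible_complex ((\<Inter>i\<in>A. CK_X r n i) \<inter> (\<Inter>i\<in>B. CK_Y r n i))"
proof -
  let ?X = "\<lambda>i. CK_X_verts r n (Suc i)" and ?Y = "\<lambda>i. CK_Y_verts r n (Suc i)"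
  let ?U = "(\<Inter>i\<in>A. ?X i) \<inter> (\<Inter>i\<in>B. ?Y i)"
  have "A \<noteq> {} \<or> B \<noteq> {}" using two by blast
  then have U: "(\<Inter>i\<in>A. CK_X r n i) \<inter> (\<Inter>i\<in>B. CK_Y r n i) = indep_complex ?U (CK_E r)"
    unfolding CK_X_def CK_Y_def by (rule Int_INT_indep_complex)
  have "(2, 1) \<in> ?U" "(r, 1) \<in> ?U"
    using assms by (auto simp: mem_CK_X_verts mem_CK_Y_verts)
  from two show ?thesis
  proof
    assume "\<exists>i\<in>A. \<exists>j\<in>A. i \<noteq> j"
    then obtain i j where "i \<in> A" "j \<in> A" "i \<noteq> j" by blast
    have "\<not> CK_E r (2, 1) y" if "y \<in> ?U" for y
    proof -
      obtain p c where y: "y = (p, c)" by force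
      have "y \<in> ?X i" "y \<in> ?X j" using that \<open>i \<in> A\<close> \<open>j \<in> A\<close> by auto
      then show ?thesis using \<open>i \<noteq> j\<close> assms(1)
        unfolding y mem_CK_X_verts[OF assms(1)] by (auto simp: CK_E_def cyc_adj_def)
    qed
    then show ?thesis unfolding U
      by (intro contractible_indep_complex_isolated[OF \<open>(2, 1) \<in> ?U\<close>]) (auto simp: CK_E_sym)
  next
    assume "\<exists>i\<in>B. \<exists>j\<in>B. i \<noteq> j"
    then obtain i j where "i \<in> B" "j \<in> B" "i \<noteq> j" by blast
    have "\<not> CK_E r (r, 1) y" if "y \<in> ?U" for y
    proof -
      obtain p c where y: "y = (p, c)" by force
      have "y \<in> ?Y i" "y \<in> ?Y j" using that \<open>i \<in> B\<close> \<open>j \<in> B\<close> by auto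
      then show ?thesis using \<open>i \<noteq> j\<close> assms(1)
        unfolding y mem_CK_Y_verts[OF assms(1)] by (auto simp: CK_E_def cyc_adj_def)
    qed
    then show ?thesis unfolding U
      by (intro contractible_indep_complex_isolated[OF \<open>(r, 1) \<in> ?U\<close>]) (auto simp: CK_E_sym)
  qed
qed

section \<open>The pieces as independence complexes of G, W and H\<close>

lemma symc_G_R_simps:
  "symc (G_R k) (P j c) (P j' d) \<longleftrightarrow> (j' = j+1 \<or> j = j'+1) \<and> c \<noteq> d"
  "symc (G_R k) (P j c) V1 \<longleftrightarrow> j = 1 \<and> 2 \<le> c"
  "symc (G_R k) V1 (P j c) \<longleftrightarrow> j = 1 \<and> 2 \<le> c"
  "symc (G_R k) (P j c) V2 \<longleftrightarrow> j = k \<and> c \<noteq> 2"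
  "symc (G_R k) V2 (P j c) \<longleftrightarrow> j = k \<and> c \<noteq> 2"
  "\<not> symc (G_R k) (P j c) W1" "\<not> symc (G_R k) W1 (P j c)"
  "\<not> symc (G_R k) (P j c) W2" "\<not> symc (G_R k) W2 (P j c)"
  "symc (G_R k) V1 W1" "symc (G_R k) W1 V1" "symc (G_R k) W1 W2" "symc (G_R k) W2 W1"
  "symc (G_R k) V2 W2" "symc (G_R k) W2 V2"
  "\<not> symc (G_R k) V1 V1" "\<not> symc (G_R k) V2 V2" "\<not> symc (G_R k) W1 W1" "\<not> symc (G_R k) W2 W2"
  "\<not> symc (G_R k) V1 V2" "\<not> symc (G_R k) V2 V1" "\<not> symc (G_R k) V1 W2" "\<not> symc (G_R k) W2 V1"
  "\<not> symc (G_R k) W1 V2" "\<not> symc (G_R k) V2 W1"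
  by (auto simp: symc_def G_R_def H_R_def PK_R_def)

lemma symc_Wr_R_simps:
  "symc (Wr_R k) (P j c) (P j' d) \<longleftrightarrow> (j' = j+1 \<or> j = j'+1) \<and> c \<noteq> d"
  "symc (Wr_R k) (P j c) V1 \<longleftrightarrow> j = 1 \<and> c \<noteq> 2"
  "symc (Wr_R k) V1 (P j c) \<longleftrightarrow> j = 1 \<and> c \<noteq> 2"
  "symc (Wr_R k) (P j c) V2 \<longleftrightarrow> j = k \<and> c \<noteq> 2"
  "symc (Wr_R k) V2 (P j c) \<longleftrightarrow> j = k \<and> c \<noteq> 2"
  "\<not> symc (Wr_R k) (P j c) W1" "\<not> symc (Wr_R k) W1 (P j c)"
  "\<not> symc (Wr_R k) (P j c) W2" "\<not> symc (Wr_R k) W2 (P j c)"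
  "\<not> symc (Wr_R k) (P j c) Wm" "\<not> symc (Wr_R k) Wm (P j c)"
  "symc (Wr_R k) V1 W1" "symc (Wr_R k) W1 V1" "symc (Wr_R k) W1 Wm" "symc (Wr_R k) Wm W1"
  "symc (Wr_R k) Wm W2" "symc (Wr_R k) W2 Wm"
  "symc (Wr_R k) V2 W2" "symc (Wr_R k) W2 V2"
  "\<not> symc (Wr_R k) V1 V1" "\<not> symc (Wr_R k) V2 V2" "\<not> symc (Wr_R k) W1 W1" "\<not> symc (Wr_R k) W2 W2"
  "\<not> symc (Wr_R k) Wm Wm"
  "\<not> symc (Wr_R k) V1 V2" "\<not> symc (Wr_R k) V2 V1" "\<not> symc (Wr_R k) V1 W2" "\<not> symc (Wr_R k) W2 V1"
  "\<not> symc (Wr_R k) W1 V2" "\<not> symc (Wr_R k) V2 W1"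
  "\<not> symc (Wr_R k) V1 Wm" "\<not> symc (Wr_R k) Wm V1" "\<not> symc (Wr_R k) V2 Wm" "\<not> symc (Wr_R k) Wm V2"
  "\<not> symc (Wr_R k) W1 W2" "\<not> symc (Wr_R k) W2 W1"
  by (auto simp: symc_def Wr_R_def W_R_def PK_R_def)

lemma symc_Hr_R_simps:
  "symc (Hr_R k) (P j c) (P j' d) \<longleftrightarrow> (j' = j+1 \<or> j = j'+1) \<and> c \<noteq> d"
  "symc (Hr_R k) (P j c) V1 \<longleftrightarrow> j = 1 \<and> 2 \<le> c"
  "symc (Hr_R k) V1 (P j c) \<longleftrightarrow> j = 1 \<and> 2 \<le> c"
  "symc (Hr_R k) (P j c) V2 \<longleftrightarrow> j = k \<and> c \<noteq> 2"
  "symc (Hr_R k) V2 (P j c) \<longleftrightarrow> j = k \<and> c \<noteq> 2"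
  "\<not> symc (Hr_R k) (P j c) W1" "\<not> symc (Hr_R k) W1 (P j c)"
  "\<not> symc (Hr_R k) (P j c) W2" "\<not> symc (Hr_R k) W2 (P j c)"
  "symc (Hr_R k) V1 W1" "symc (Hr_R k) W1 V1"
  "symc (Hr_R k) V2 W2" "symc (Hr_R k) W2 V2"
  "\<not> symc (Hr_R k) V1 V1" "\<not> symc (Hr_R k) V2 V2" "\<not> symc (Hr_R k) W1 W1" "\<not> symc (Hr_R k) W2 W2"
  "\<not> symc (Hr_R k) V1 V2" "\<not> symc (Hr_R k) V2 V1" "\<not> symc (Hr_R k) V1 W2" "\<not> symc (Hr_R k) W2 V1"
  "\<not> symc (Hr_R k) W1 V2" "\<not> symc (Hr_R k) V2 W1"
  "\<not> symc (Hr_R k) W1 W2" "\<not> symc (Hr_R k) W2 W1"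
  by (auto simp: symc_def Hr_R_def H_R_def PK_R_def)

lemma mem_G_V [simp]:
  "P j c \<in> G_V k n \<longleftrightarrow> j \<in> {1..k} \<and> c \<in> {1..n}"
  "V1 \<in> G_V k n" "V2 \<in> G_V k n" "W1 \<in> G_V k n" "W2 \<in> G_V k n" "Wm \<notin> G_V k n"
  by (auto simp: G_V_def H_V_def PK_V_def)

lemma mem_Wr_V [simp]:
  "P j c \<in> Wr_V k n \<longleftrightarrow> j \<in> {1..k} \<and> c \<in> {1..n}"
  "V1 \<in> Wr_V k n" "V2 \<in> Wr_V k n" "W1 \<in> Wr_V k n" "W2 \<in> Wr_V k n" "Wm \<in> Wr_V k n"
  by (auto simp: Wr_V_def W_V_def PK_V_def)

lemma mem_Hr_V [simp]:
  "P j c \<in> Hr_V k n \<longleftrightarrow> j \<in> {1..k} \<and> c \<in> {1..n}"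
  "V1 \<in> Hr_V k n" "V2 \<in> Hr_V k n" "W1 \<in> Hr_V k n" "W2 \<in> Hr_V k n" "Wm \<notin> Hr_V k n"
  by (auto simp: Hr_V_def H_V_def PK_V_def)

lemma symc_G_R_irrefl: "\<not> symc (G_R k) x x"
  by (auto simp: symc_def G_R_def H_R_def PK_R_def)

lemma symc_Wr_R_irrefl: "\<not> symc (Wr_R k) x x"
  by (auto simp: symc_def Wr_R_def W_R_def PK_R_def)

lemma symc_Hr_R_irrefl: "\<not> symc (Hr_R k) x x"
  by (auto simp: symc_def Hr_R_def H_R_def PK_R_def)

text \<open>Each isomorphism below sends the path layers P_j to consecutive full layers of the cycle
and the remaining vertices to the singleton layers around u_1. The colour permutation sends the
colour that v_1 (resp. v_2) does not see on the adjacent end of the path to the colour of the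
singleton layer next to that end.\<close>

lemma CK_X_iso_I_G:
  assumes r: "5 \<le> r" and i: "i \<in> {1..n-1}"
  shows "CK_X r n i \<cong>\<^sub>s I_G (r - 4) n"
proof -
  define a where "a = Suc i"
  have a: "a \<in> {2..n}" using i by (auto simp: a_def)
  define \<tau> where "\<tau> = Transposition.transpose 2 a"
  \<comment> \<open>both 1 and Suc 0, since the simplifier rewrites 1 :: nat to Suc 0\<close>
  have col: "\<tau> c = 1 \<longleftrightarrow> c = 1" "1 = \<tau> c \<longleftrightarrow> c = 1" "\<tau> c = Suc 0 \<longleftrightarrow> c = 1" "Suc 0 = \<tau> c \<longleftrightarrow> c = 1"
    "\<tau> c = a \<longleftrightarrow> c = 2" "a = \<tau> c \<longleftrightarrow> c = 2" "\<tau> c = \<tau> d \<longleftrightarrow> c = d" for c d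
    using a by (auto simp: \<tau>_def Transposition.transpose_def)
  define g where "g x = (case x of P j c \<Rightarrow> (r - j, \<tau> c)
    | V1 \<Rightarrow> (r, 1) | W1 \<Rightarrow> (1, a) | W2 \<Rightarrow> (2, 1) | V2 \<Rightarrow> (3, a) | Wm \<Rightarrow> undefined)" for x
  define h where "h y = (case y of (p, c) \<Rightarrow> if p = r then V1 else if p = 1 then W1
    else if p = 2 then W2 else if p = 3 then V2 else P (r - p) (\<tau> c))" for y
  have "bij_betw g (G_V (r - 4) n) (CK_X_verts r n a)"
  proof (rule bij_betw_byWitness[where f' = h])
    show "\<forall>x\<in>G_V (r - 4) n. h (g x) = x"
      using r a by (auto simp: G_V_def H_V_def PK_V_def g_def h_def \<tau>_def)
    show "\<forall>y\<in>CK_X_verts r n a. g (h y) = y"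
      using r a by (auto simp: mem_CK_X_verts g_def h_def \<tau>_def)
    show "g ` G_V (r - 4) n \<subseteq> CK_X_verts r n a"
    proof
      fix y assume "y \<in> g ` G_V (r - 4) n"
      then obtain x where "x \<in> G_V (r - 4) n" "y = g x" by blast
      then show "y \<in> CK_X_verts r n a"
        using r a by (cases x) (auto simp: mem_CK_X_verts \<tau>_def Transposition.transpose_def g_def)
    qed
    show "h ` CK_X_verts r n a \<subseteq> G_V (r - 4) n"
      using r a by (auto simp: mem_CK_X_verts \<tau>_def Transposition.transpose_def h_def)
  qed
  moreover have "symc (G_R (r - 4)) x y \<longleftrightarrow> CK_E r (g x) (g y)"
    if "x \<in> G_V (r - 4) n" "y \<in> G_V (r - 4) n" for x y
    using that r a
    by (cases x; cases y; simp add: g_def symc_G_R_simps CK_E_def col;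
        simp add: cyc_adj_def; linarith?)
  ultimately show ?thesis unfolding I_G_def CK_X_def a_def[symmetric]
    by (rule indep_complex_iso) (simp_all add: CK_E_irrefl symc_G_R_irrefl)
qed

lemma CK_Y_iso_I_G:
  assumes r: "5 \<le> r" and i: "i \<in> {1..n-1}"
  shows "CK_Y r n i \<cong>\<^sub>s I_G (r - 4) n"
proof -
  define a where "a = Suc i"
  have a: "a \<in> {2..n}" using i by (auto simp: a_def)
  define \<tau> where "\<tau> = Transposition.transpose 2 a"
  have col: "\<tau> c = 1 \<longleftrightarrow> c = 1" "1 = \<tau> c \<longleftrightarrow> c = 1" "\<tau> c = Suc 0 \<longleftrightarrow> c = 1" "Suc 0 = \<tau> c \<longleftrightarrow> c = 1"
    "\<tau> c = a \<longleftrightarrow> c = 2" "a = \<tau> c \<longleftrightarrow> c = 2" "\<tau> c = \<tau> d \<longleftrightarrow> c = d" for c d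
    using a by (auto simp: \<tau>_def Transposition.transpose_def)
  define g where "g x = (case x of P j c \<Rightarrow> (j + 2, \<tau> c)
    | V1 \<Rightarrow> (2, 1) | W1 \<Rightarrow> (1, a) | W2 \<Rightarrow> (r, 1) | V2 \<Rightarrow> (r - 1, a) | Wm \<Rightarrow> undefined)" for x
  define h where "h y = (case y of (p, c) \<Rightarrow> if p = 2 then V1 else if p = 1 then W1
    else if p = r then W2 else if p = r - 1 then V2 else P (p - 2) (\<tau> c))" for y
  have "bij_betw g (G_V (r - 4) n) (CK_Y_verts r n a)"
  proof (rule bij_betw_byWitness[where f' = h])
    show "\<forall>x\<in>G_V (r - 4) n. h (g x) = x"
      using r a by (auto simp: G_V_def H_V_def PK_V_def g_def h_def \<tau>_def)
    show "\<forall>y\<in>CK_Y_verts r n a. g (h y) = y"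
      using r a by (auto simp: mem_CK_Y_verts g_def h_def \<tau>_def)
    show "g ` G_V (r - 4) n \<subseteq> CK_Y_verts r n a"
    proof
      fix y assume "y \<in> g ` G_V (r - 4) n"
      then obtain x where "x \<in> G_V (r - 4) n" "y = g x" by blast
      then show "y \<in> CK_Y_verts r n a"
        using r a by (cases x) (auto simp: mem_CK_Y_verts \<tau>_def Transposition.transpose_def g_def)
    qed
    show "h ` CK_Y_verts r n a \<subseteq> G_V (r - 4) n"
      using r a by (auto simp: mem_CK_Y_verts \<tau>_def Transposition.transpose_def h_def)
  qed
  moreover have "symc (G_R (r - 4)) x y \<longleftrightarrow> CK_E r (g x) (g y)"
    if "x \<in> G_V (r - 4) n" "y \<in> G_V (r - 4) n" for x y
    using that r a
    by (cases x; cases y; simp add: g_def symc_G_R_simps CK_E_def col;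
        simp add: cyc_adj_def; linarith?)
  ultimately show ?thesis unfolding I_G_def CK_Y_def a_def[symmetric]
    by (rule indep_complex_iso) (simp_all add: CK_E_irrefl symc_G_R_irrefl)
qed

lemma CK_X_Int_CK_Y_iso_I_Wr:
  assumes r: "6 \<le> r" and i: "i \<in> {1..n-1}"
  shows "CK_X r n i \<inter> CK_Y r n i \<cong>\<^sub>s I_Wr (r - 5) n"
proof -
  define a where "a = Suc i"
  have a: "a \<in> {2..n}" using i by (auto simp: a_def)
  define \<tau> where "\<tau> = Transposition.transpose 2 a"
  have col: "\<tau> c = 1 \<longleftrightarrow> c = 1" "1 = \<tau> c \<longleftrightarrow> c = 1" "\<tau> c = Suc 0 \<longleftrightarrow> c = 1" "Suc 0 = \<tau> c \<longleftrightarrow> c = 1"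
    "\<tau> c = a \<longleftrightarrow> c = 2" "a = \<tau> c \<longleftrightarrow> c = 2" "\<tau> c = \<tau> d \<longleftrightarrow> c = d" for c d
    using a by (auto simp: \<tau>_def Transposition.transpose_def)
  define g where "g x = (case x of P j c \<Rightarrow> (j + 3, \<tau> c)
    | V1 \<Rightarrow> (3, a) | W1 \<Rightarrow> (2, 1) | Wm \<Rightarrow> (1, a) | W2 \<Rightarrow> (r, 1) | V2 \<Rightarrow> (r - 1, a))" for x
  define h where "h y = (case y of (p, c) \<Rightarrow> if p = 3 then V1 else if p = 2 then W1
    else if p = 1 then Wm else if p = r then W2 else if p = r - 1 then V2
    else P (p - 3) (\<tau> c))" for y
  have "bij_betw g (Wr_V (r - 5) n) (CK_X_verts r n a \<inter> CK_Y_verts r n a)"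
  proof (rule bij_betw_byWitness[where f' = h])
    show "\<forall>x\<in>Wr_V (r - 5) n. h (g x) = x"
    proof
      fix x assume "x \<in> Wr_V (r - 5) n" then show "h (g x) = x"
        using r a by (cases x) (auto simp: g_def h_def \<tau>_def)
    qed
    show "\<forall>y\<in>CK_X_verts r n a \<inter> CK_Y_verts r n a. g (h y) = y"
      using r a by (auto simp: mem_CK_X_verts mem_CK_Y_verts g_def h_def \<tau>_def)
    show "g ` Wr_V (r - 5) n \<subseteq> CK_X_verts r n a \<inter> CK_Y_verts r n a"
    proof
      fix y assume "y \<in> g ` Wr_V (r - 5) n"
      then obtain x where "x \<in> Wr_V (r - 5) n" "y = g x" by blast
      then show "y \<in> CK_X_verts r n a \<inter> CK_Y_verts r n a"
        using r a by (cases x)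
          (auto simp: mem_CK_X_verts mem_CK_Y_verts \<tau>_def Transposition.transpose_def g_def)
    qed
    show "h ` (CK_X_verts r n a \<inter> CK_Y_verts r n a) \<subseteq> Wr_V (r - 5) n"
      using r a
      by (auto simp: mem_CK_X_verts mem_CK_Y_verts \<tau>_def Transposition.transpose_def h_def)
  qed
  moreover have "symc (Wr_R (r - 5)) x y \<longleftrightarrow> CK_E r (g x) (g y)"
    if "x \<in> Wr_V (r - 5) n" "y \<in> Wr_V (r - 5) n" for x y
    using that r a
    by (cases x; cases y; simp add: g_def symc_Wr_R_simps CK_E_def col;
        simp add: cyc_adj_def; linarith?)
  ultimately show ?thesis unfolding I_Wr_def CK_X_def CK_Y_def indep_complex_Int a_def[symmetric]
    by (rule indep_complex_iso) (simp_all add: CK_E_irrefl symc_Wr_R_irrefl)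
qed

lemma CK_X_Int_CK_Y_iso_I_Hr:
  assumes r: "6 \<le> r" and ij: "i \<in> {1..n-1}" "j \<in> {1..n-1}" "i \<noteq> j"
  shows "CK_X r n i \<inter> CK_Y r n j \<cong>\<^sub>s I_Hr (r - 5) n"
proof -
  define a b where "a = Suc i" and "b = Suc j"
  have a: "a \<in> {2..n}" and b: "b \<in> {2..n}" and ab: "a \<noteq> b" using ij by (auto simp: a_def b_def)
  define \<sigma> where "\<sigma> c = Transposition.transpose 1 a (Transposition.transpose 2 b c)" for c
  define \<sigma>' where "\<sigma>' c = Transposition.transpose 2 b (Transposition.transpose 1 a c)" for c
  have col: "\<sigma> c = a \<longleftrightarrow> c = 1" "a = \<sigma> c \<longleftrightarrow> c = 1" "\<sigma> c = b \<longleftrightarrow> c = 2" "b = \<sigma> c \<longleftrightarrow> c = 2"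
    "\<sigma> c = \<sigma> d \<longleftrightarrow> c = d" "\<sigma> (\<sigma>' c) = c" "\<sigma>' (\<sigma> c) = c" for c d
    using a b ab by (auto simp: \<sigma>_def \<sigma>'_def Transposition.transpose_def)
  have col_range: "\<sigma> c \<in> {1..n}" "\<sigma>' c \<in> {1..n}" if "c \<in> {1..n}" for c
    using a b that by (auto simp: \<sigma>_def \<sigma>'_def Transposition.transpose_def)
  define g where "g x = (case x of P k c \<Rightarrow> (k + 3, \<sigma> c)
    | V1 \<Rightarrow> (3, a) | W1 \<Rightarrow> (2, 1) | W2 \<Rightarrow> (r, 1) | V2 \<Rightarrow> (r - 1, b) | Wm \<Rightarrow> undefined)" for x
  define h where "h y = (case y of (p, c) \<Rightarrow> if p = 3 then V1 else if p = 2 then W1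
    else if p = r then W2 else if p = r - 1 then V2 else P (p - 3) (\<sigma>' c))" for y
  have "bij_betw g (Hr_V (r - 5) n) (CK_X_verts r n a \<inter> CK_Y_verts r n b)"
  proof (rule bij_betw_byWitness[where f' = h])
    show "\<forall>x\<in>Hr_V (r - 5) n. h (g x) = x"
    proof
      fix x assume "x \<in> Hr_V (r - 5) n" then show "h (g x) = x"
        using r a b ab by (cases x) (auto simp: g_def h_def col)
    qed
    show "\<forall>y\<in>CK_X_verts r n a \<inter> CK_Y_verts r n b. g (h y) = y"
      using r a b ab by (auto simp: mem_CK_X_verts mem_CK_Y_verts g_def h_def col)
    show "g ` Hr_V (r - 5) n \<subseteq> CK_X_verts r n a \<inter> CK_Y_verts r n b"
    proof
      fix y assume "y \<in> g ` Hr_V (r - 5) n"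
      then obtain x where "x \<in> Hr_V (r - 5) n" "y = g x" by blast
      then show "y \<in> CK_X_verts r n a \<inter> CK_Y_verts r n b"
      proof (cases x)
        case (P k c)
        then show ?thesis using \<open>x \<in> Hr_V (r - 5) n\<close> \<open>y = g x\<close> col_range[of c] r
          by (auto simp: mem_CK_X_verts mem_CK_Y_verts g_def col)
      qed (use \<open>y = g x\<close> r a b in \<open>auto simp: mem_CK_X_verts mem_CK_Y_verts g_def\<close>)
    qed
    show "h ` (CK_X_verts r n a \<inter> CK_Y_verts r n b) \<subseteq> Hr_V (r - 5) n"
    proof
      fix x assume "x \<in> h ` (CK_X_verts r n a \<inter> CK_Y_verts r n b)"
      then obtain p c where m: "(p, c) \<in> CK_X_verts r n a" "(p, c) \<in> CK_Y_verts r n b"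
        and x: "x = h (p, c)" by auto
      have "p \<in> {2..r}" "c \<in> {1..n}"
        using m r ab by (auto simp: mem_CK_X_verts mem_CK_Y_verts)
      then show "x \<in> Hr_V (r - 5) n" using x col_range[of c] by (auto simp: h_def)
    qed
  qed
  moreover have "symc (Hr_R (r - 5)) x y \<longleftrightarrow> CK_E r (g x) (g y)"
    if "x \<in> Hr_V (r - 5) n" "y \<in> Hr_V (r - 5) n" for x y
    using that r a b ab
    by (cases x; cases y; simp add: g_def symc_Hr_R_simps CK_E_def col;
        simp add: cyc_adj_def; linarith?)
  ultimately show ?thesis
    unfolding I_Hr_def CK_X_def CK_Y_def indep_complex_Int a_def[symmetric] b_def[symmetric]
    by (rule indep_complex_iso) (simp_all add: CK_E_irrefl symc_Hr_R_irrefl)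
qed

theorem mainTheorem17:
  fixes r n :: nat
  assumes "r \<ge> 6" and "n \<ge> 3"
  defines "K \<equiv> indep_complex (CK_V r n) (CK_E r)"
      and "v \<equiv> (1::nat, 1::nat)"
  shows "\<exists>X Y :: nat \<Rightarrow> (nat \<times> nat) set set.
     (\<forall>i\<in>{1..n-1}. subcomplex (X i) K \<and> subcomplex (Y i) K) \<and>
     star K {v} \<inter> star_cluster (CK_V r n) (CK_E r) v = (\<Union>i\<in>{1..n-1}. X i \<union> Y i) \<and>
     (\<forall>i\<in>{1..n-1}. X i \<cong>\<^sub>s I_G (r - 4) n \<and> Y i \<cong>\<^sub>s I_G (r - 4) n) \<and>
     (r \<ge> 7 \<longrightarrow> (\<forall>i\<in>{1..n-1}. (X i \<inter> Y i) \<cong>\<^sub>s I_Wr (r - 5) n)) \<and>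
     (r \<ge> 7 \<longrightarrow> (\<forall>i\<in>{1..n-1}. \<forall>j\<in>{1..n-1}. i \<noteq> j \<longrightarrow> (X i \<inter> Y j) \<cong>\<^sub>s I_Hr (r - 5) n)) \<and>
     (\<forall>i\<in>{1..n-1}. \<forall>j\<in>{1..n-1}. i \<noteq> j \<longrightarrow>
        contractible_complex (X i \<inter> X j) \<and> contractible_complex (Y i \<inter> Y j)) \<and>
     (\<forall>A B. A \<subseteq> {1..n-1} \<longrightarrow> B \<subseteq> {1..n-1} \<longrightarrow> card A + card B \<ge> 3 \<longrightarrow>
        contractible_complex ((\<Inter>i\<in>A. X i) \<inter> (\<Inter>i\<in>B. Y i)))"
proof -
  have r: "3 \<le> r" "4 \<le> r" "5 \<le> r" "6 \<le> r" and n: "1 \<le> n" using assms by auto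
  have pairs: "contractible_complex (CK_X r n i \<inter> CK_X r n j)"
    "contractible_complex (CK_Y r n i \<inter> CK_Y r n j)" if "i \<noteq> j" for i j
  proof -
    have "contractible_complex ((\<Inter>k\<in>{i, j}. CK_X r n k) \<inter> (\<Inter>k\<in>{}. CK_Y r n k))"
      "contractible_complex ((\<Inter>k\<in>{}. CK_X r n k) \<inter> (\<Inter>k\<in>{i, j}. CK_Y r n k))"
      using that r n by (intro contractible_CK_Inter; blast)+
    then show "contractible_complex (CK_X r n i \<inter> CK_X r n j)"
      "contractible_complex (CK_Y r n i \<inter> CK_Y r n j)" by simp_all
  qed
  have many: "contractible_complex ((\<Inter>i\<in>A. CK_X r n i) \<inter> (\<Inter>i\<in>B. CK_Y r n i))"
    if "3 \<le> card A + card B" for A B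
  proof (rule contractible_CK_Inter[OF r(2) n])
    have "2 \<le> card A \<or> 2 \<le> card B" using that by linarith
    then show "(\<exists>i\<in>A. \<exists>j\<in>A. i \<noteq> j) \<or> (\<exists>i\<in>B. \<exists>j\<in>B. i \<noteq> j)"
      using card_ge_2_ex_distinct by blast
  qed
  show ?thesis unfolding K_def v_def
    by (intro exI[of _ "CK_X r n"] exI[of _ "CK_Y r n"] conjI ballI impI allI
        subcomplex_CK_X subcomplex_CK_Y star_Int_star_cluster_CK[OF r(1) n]
        CK_X_iso_I_G CK_Y_iso_I_G CK_X_Int_CK_Y_iso_I_Wr CK_X_Int_CK_Y_iso_I_Hr pairs many)
      (use r in auto)
qed

end
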